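(* Let $a, b, n$ be positive integers with $b>1$, $n>1$ and $\gcd(r_b(n),a)=1$. Then the numerical semigroup $S_a(b,n)$ is homogeneous.
   Context: For an integer $\ell \ge 1$, $r_b(\ell) = \sum_{j=0}^{\ell-1} b^j$, and $r_b(0)=0$. For $i \ge 1$, $a_i := r_b(n) + a\, r_b(i-1)$; $S_a(b,n)$ is the numerical semigroup generated by $\{a_i\}$, minimally generated by $a_1,\ldots,a_n$. For a numerical semigroup $S$ minimally generated by $\{g_1,\ldots,g_e\}$ and $s\in S$, the set of lengths is $\mathsf{L}_S(s) = \{\sum_j u_j : s = \sum_j u_j g_j,\ u_j \in \mathbb{N}\}$. $S$ is homogeneous if $\mathsf{L}_S(s)$ is a singleton for every $s \in \operatorname{Ap}(S) = \{\omega\in S: \omega - \operatorname{m}(S)\notin S\}$, with $\operatorname{m}(S)$ the multiplicity (smallest nonzero element). *)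

theory Defs
  imports Main
begin

definition repunit :: "nat \<Rightarrow> nat \<Rightarrow> nat" where
  "repunit b l = (\<Sum>j<l. b ^ j)"

inductive_set monoid_gen :: "nat set \<Rightarrow> nat set" for A where
  zero: "0 \<in> monoid_gen A"
| add: "x \<in> A \<Longrightarrow> y \<in> monoid_gen A \<Longrightarrow> x + y \<in> monoid_gen A"

definition numerical_semigroup :: "nat set \<Rightarrow> bool" where
  "numerical_semigroup S \<longleftrightarrow> 0 \<in> S \<and> (\<forall>x\<in>S. \<forall>y\<in>S. x + y \<in> S) \<and> finite (UNIV - S)"

definition gen_a :: "nat \<Rightarrow> nat \<Rightarrow> nat \<Rightarrow> nat \<Rightarrow> nat" where
  "gen_a a b n i = repunit b n + a * repunit b (i - 1)"

definition S_abn :: "nat \<Rightarrow> nat \<Rightarrow> nat \<Rightarrow> nat set" where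
  "S_abn a b n = monoid_gen {gen_a a b n i | i. i \<ge> 1}"

definition min_gens :: "nat set \<Rightarrow> nat set" where
  "min_gens S = {x \<in> S. x \<noteq> 0 \<and> \<not> (\<exists>y\<in>S. \<exists>z\<in>S. y \<noteq> 0 \<and> z \<noteq> 0 \<and> x = y + z)}"

definition multiplicity_ns :: "nat set \<Rightarrow> nat" where
  "multiplicity_ns S = (LEAST x. x \<in> S \<and> x \<noteq> 0)"

definition apery :: "nat set \<Rightarrow> nat set" where
  "apery S = {w \<in> S. \<not> (w \<ge> multiplicity_ns S \<and> w - multiplicity_ns S \<in> S)}"

definition lengths :: "nat set \<Rightarrow> nat \<Rightarrow> nat set" where
  "lengths S s = {(\<Sum>g\<in>min_gens S. u g) | u. s = (\<Sum>g\<in>min_gens S. u g * g)}"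

definition homogeneous :: "nat set \<Rightarrow> bool" where
  "homogeneous S \<longleftrightarrow> (\<forall>s\<in>apery S. \<exists>l. lengths S s = {l})"

end

theory Submission
  imports Defs "HOL-Library.Multiset"
begin

text \<open>Put \<open>gen e = r_b(n) + a r_b(e)\<close> for all \<open>e \<ge> 0\<close>, so \<open>a_i = gen (i - 1)\<close>. Since
  \<open>gen (m + n) = gen m + a b^m r_b(n)\<close>, the elements \<open>gen 0, \<dots>, gen (n - 1)\<close> generate, and
  coprimality of \<open>a\<close> and \<open>r_b(n)\<close> makes them minimal; the multiplicity is \<open>gen 0 = r_b(n)\<close>.
  A factorization is a multiset \<open>E\<close> of exponents, and the identity
  \<open>(b - 1) \<cdot> (sum of gen over E) + a |E| = |E| (b^n - 1) + a \<cdot> (sum of b^e over E)\<close>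
  shows that its length and its base-\<open>b\<close> value determine the factored element. An Apery element
  has no factorization using the exponent \<open>0\<close> or an exponent \<open>\<ge> n\<close>. If it had factorizations
  of different lengths, \<open>a\<close> would divide the difference of the lengths, which forces the
  base-\<open>b\<close> value of the shorter one above \<open>b^n\<close>. Carrying \<open>b\<close> equal exponents into the next
  one until an exponent \<open>\<ge> n\<close> appears, and then splitting exponents again, yields a
  factorization of the same length and value, hence of the same element, that uses \<open>0\<close> or an
  exponent \<open>\<ge> n\<close>.\<close>

lemma monoid_gen_eq_sum_mset: "monoid_gen A = {\<Sum>\<^sub># X | X. set_mset X \<subseteq> A}"
proof (intro set_eqI iffI)
  fix x assume "x \<in> monoid_gen A"
  then show "x \<in> {\<Sum>\<^sub># X | X. set_mset X \<subseteq> A}"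
  proof (induction x rule: monoid_gen.induct)
    case zero
    show ?case by (auto intro: exI[of _ "{#}"])
  next
    case (add x y)
    then obtain Y where "set_mset Y \<subseteq> A" "y = \<Sum>\<^sub># Y" by blast
    with add.hyps(1) show ?case by (auto intro!: exI[of _ "add_mset x Y"])
  qed
next
  fix x assume "x \<in> {\<Sum>\<^sub># X | X. set_mset X \<subseteq> A}"
  then obtain X where "set_mset X \<subseteq> A" "x = \<Sum>\<^sub># X" by blast
  then show "x \<in> monoid_gen A"
    by (induction X arbitrary: x) (auto intro: monoid_gen.intros)
qed

lemma sum_mset_min_gens:
  fixes S :: "nat set"
  assumes "x \<in> S"
  shows "\<exists>X. set_mset X \<subseteq> min_gens S \<and> \<Sum>\<^sub># X = x"
  using assms
proof (induction x rule: less_induct)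
  case (less x)
  consider "x = 0" | "x \<in> min_gens S" | y z where "y \<in> S" "z \<in> S" "y \<noteq> 0" "z \<noteq> 0" "x = y + z"
    using less.prems unfolding min_gens_def by blast
  then show ?case
  proof cases
    case 1
    then show ?thesis by (auto intro: exI[of _ "{#}"])
  next
    case 2
    then show ?thesis by (auto intro: exI[of _ "{#x#}"])
  next
    case 3
    have "y < x" "z < x" using 3 by simp_all
    then obtain Y Z where "set_mset Y \<subseteq> min_gens S" "\<Sum>\<^sub># Y = y" "set_mset Z \<subseteq> min_gens S" "\<Sum>\<^sub># Z = z"
      using less.IH 3 by meson
    with 3 show ?thesis by (auto intro!: exI[of _ "Y + Z"])
  qed
qed

lemma sum_mset_eq_sum_count:
  assumes "finite A" "set_mset X \<subseteq> A"
  shows "(\<Sum>x\<in>#X. f x) = (\<Sum>x\<in>A. count X x * (f x :: nat))"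
  using assms(2)
proof (induction X)
  case empty
  show ?case by simp
next
  case (add y X)
  have "(\<Sum>x\<in>A. count (add_mset y X) x * f x) = (\<Sum>x\<in>A. count X x * f x + (if x = y then f x else 0))"
    by (rule sum.cong) (auto simp: algebra_simps)
  also have "\<dots> = (\<Sum>x\<in>A. count X x * f x) + f y"
    using add.prems assms(1) by (simp add: sum.distrib)
  finally show ?case using add by simp
qed

lemma lengths_eq_sizes:
  assumes "finite (min_gens S)"
  shows "lengths S s = {size X | X. set_mset X \<subseteq> min_gens S \<and> \<Sum>\<^sub># X = s}"
proof (intro set_eqI iffI)
  let ?G = "min_gens S"
  fix l assume "l \<in> lengths S s"
  then obtain u where l: "l = (\<Sum>g\<in>?G. u g)" and s: "s = (\<Sum>g\<in>?G. u g * g)"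
    unfolding lengths_def by blast
  define X where "X = (\<Sum>g\<in>?G. replicate_mset (u g) g)"
  have count_X: "count X x = (if x \<in> ?G then u x else 0)" for x
    using assms by (simp add: X_def count_sum sum.delta')
  have X_sub: "set_mset X \<subseteq> ?G"
    using count_X by (auto simp: set_mset_def split: if_splits)
  have "size X = l"
    using sum_mset_eq_sum_count[OF assms X_sub, of "\<lambda>_. 1"] by (simp add: count_X l)
  moreover have "\<Sum>\<^sub># X = s"
    using sum_mset_eq_sum_count[OF assms X_sub, of "\<lambda>x. x"] by (simp add: count_X s)
  ultimately show "l \<in> {size X | X. set_mset X \<subseteq> ?G \<and> \<Sum>\<^sub># X = s}"
    using X_sub by blast
next
  let ?G = "min_gens S"
  fix l assume "l \<in> {size X | X. set_mset X \<subseteq> ?G \<and> \<Sum>\<^sub># X = s}"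
  then obtain X where X: "set_mset X \<subseteq> ?G" "\<Sum>\<^sub># X = s" and l: "l = size X" by blast
  have "l = (\<Sum>g\<in>?G. count X g)"
    using sum_mset_eq_sum_count[OF assms X(1), of "\<lambda>_. 1"] by (simp add: l)
  moreover have "s = (\<Sum>g\<in>?G. count X g * g)"
    using sum_mset_eq_sum_count[OF assms X(1), of "\<lambda>x. x"] X(2) by simp
  ultimately show "l \<in> lengths S s" unfolding lengths_def by blast
qed

lemma ex_image_mset_eq:
  assumes "set_mset X \<subseteq> f ` A"
  shows "\<exists>E. set_mset E \<subseteq> A \<and> X = image_mset f E"
proof (intro exI conjI)
  show "set_mset (image_mset (inv_into A f) X) \<subseteq> A"
    using assms by (auto intro: inv_into_into)
  have "image_mset f (image_mset (inv_into A f) X) = image_mset id X"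
    unfolding multiset.map_comp using assms by (intro image_mset_cong) (auto simp: f_inv_into_f)
  then show "X = image_mset f (image_mset (inv_into A f) X)" by simp
qed

lemma repunit_0 [simp]: "repunit b 0 = 0"
  by (simp add: repunit_def)

lemma repunit_Suc: "repunit b (Suc l) = repunit b l + b ^ l"
  by (simp add: repunit_def)

lemma repunit_add: "repunit b (m + l) = repunit b m + b ^ m * repunit b l"
  by (induction l) (simp_all add: repunit_Suc power_add algebra_simps)

lemma repunit_strict_mono: "1 \<le> b \<Longrightarrow> strict_mono (repunit b)"
  by (simp add: strict_mono_Suc_iff repunit_Suc)

lemma pred_mult_repunit:
  assumes "1 \<le> b"
  shows "(b - 1) * repunit b l + 1 = b ^ l"
proof -
  obtain c where "b = Suc c" using assms by (cases b) auto
  then show ?thesis by (induction l) (simp_all add: repunit_Suc algebra_simps)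
qed

lemma size_le_sum_mset_power: "0 < b \<Longrightarrow> size X \<le> (\<Sum>e\<in>#X. b ^ e :: nat)"
  using sum_mset_mono[of X "\<lambda>_. 1" "\<lambda>e. b ^ e"] by simp

lemma sum_mset_power_less:
  assumes "\<forall>e\<in>#X. e < n" and "\<forall>e. count X e < b"
  shows "(\<Sum>e\<in>#X. b ^ e) < (b ^ n :: nat)"
proof -
  have "1 \<le> b" using assms(2) by (metis less_one not_less_zero not_le)
  have "(\<Sum>e\<in>#X. b ^ e) = (\<Sum>e<n. count X e * b ^ e)"
    using assms(1) by (intro sum_mset_eq_sum_count) auto
  also have "\<dots> \<le> (\<Sum>e<n. (b - 1) * b ^ e)"
  proof (intro sum_mono mult_right_mono)
    show "count X e \<le> b - 1" for e using assms(2)[rule_format, of e] by linarith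
  qed simp
  also have "\<dots> = (b - 1) * repunit b n" by (simp add: repunit_def sum_distrib_left)
  also have "\<dots> < b ^ n" using pred_mult_repunit[OF \<open>1 \<le> b\<close>, of n] by linarith
  finally show ?thesis .
qed

lemma carry_until_exponent_ge:
  assumes "1 < b" and "b ^ n < (\<Sum>e\<in>#X. b ^ e :: nat)"
  shows "\<exists>Y j. (\<Sum>e\<in>#Y. b ^ e) = (\<Sum>e\<in>#X. b ^ e) \<and> size X = size Y + j * (b - 1) \<and> (\<exists>e\<in>#Y. n \<le> e)"
  using assms(2)
proof (induction X rule: measure_induct_rule[where f = size])
  case (less X)
  show ?case
  proof (cases "\<exists>e\<in>#X. n \<le> e")
    case True
    then show ?thesis by (intro exI[of _ X] exI[of _ 0]) simp
  next
    case False
    have "\<not> (\<forall>e. count X e < b)"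
    proof
      assume "\<forall>e. count X e < b"
      with False have "(\<Sum>e\<in>#X. b ^ e) < b ^ n" by (intro sum_mset_power_less) (auto simp: not_le)
      with less.prems show False by simp
    qed
    then obtain e where "b \<le> count X e" by (meson not_less)
    then obtain X0 where X: "X = replicate_mset b e + X0"
      by (metis count_le_replicate_mset_subset_eq subset_mset.le_iff_add)
    define X1 where "X1 = add_mset (Suc e) X0"
    have "size X1 < size X" "(\<Sum>e\<in>#X1. b ^ e) = (\<Sum>e\<in>#X. b ^ e)"
      using assms(1) by (simp_all add: X X1_def)
    with less.IH obtain Y j where Y: "(\<Sum>e\<in>#Y. b ^ e) = (\<Sum>e\<in>#X. b ^ e)"
      "size X1 = size Y + j * (b - 1)" "\<exists>e\<in>#Y. n \<le> e"
      using less.prems by metis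
    have "size X = size Y + Suc j * (b - 1)"
      using Y(2) assms(1) by (simp add: X X1_def)
    with Y show ?thesis by blast
  qed
qed

lemma borrow_keeping_exponent_outside:
  assumes "1 < b" and "\<not> set_mset X \<subseteq> {1..<n}"
    and "b ^ n < (\<Sum>e\<in>#X. b ^ e :: nat)" and "size X < (\<Sum>e\<in>#X. b ^ e)"
  shows "\<exists>Y. size Y = size X + (b - 1) \<and> (\<Sum>e\<in>#Y. b ^ e) = (\<Sum>e\<in>#X. b ^ e)
    \<and> \<not> set_mset Y \<subseteq> {1..<n}"
proof -
  obtain c where c: "c \<in># X" "c \<notin> {1..<n}" using assms(2) by blast
  then obtain X' where X: "X = add_mset c X'" by (metis multi_member_split)
  show ?thesis
  proof (cases "\<exists>e. Suc e \<in># X'")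
    case True
    then obtain e X0 where "X' = add_mset (Suc e) X0" by (metis multi_member_split)
    moreover have "c \<in># add_mset c (X0 + replicate_mset b e)" by simp
    ultimately show ?thesis using assms(1) c(2)
      by (intro exI[of _ "add_mset c (X0 + replicate_mset b e)"]) (auto simp: X)
  next
    case False
    then have zeros: "\<forall>x\<in>#X'. x = 0" by (metis not0_implies_Suc)
    then have "(\<Sum>e\<in>#X'. b ^ e) = size X'" by (induction X') auto
    then obtain e where e: "c = Suc e" using assms(4) X by (cases c) auto
    have "\<not> set_mset (X' + replicate_mset b e) \<subseteq> {1..<n}"
    proof (cases "X' = {#}")
      case True
      then have "b ^ n < b ^ c" using assms(3) X by simp
      then have "n < c" by (rule power_less_imp_less_exp[OF assms(1)])
      then show ?thesis using assms(1) e by simp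
    next
      case False
      then obtain x where "x \<in># X'" by blast
      then have "0 \<in># X'" using zeros by metis
      then show ?thesis by auto
    qed
    then show ?thesis using assms(1) by (intro exI[of _ "X' + replicate_mset b e"]) (simp add: X e)
  qed
qed

lemma borrow_iterated:
  assumes "1 < b" and "\<not> set_mset X \<subseteq> {1..<n}" and "b ^ n < (\<Sum>e\<in>#X. b ^ e :: nat)"
    and "size X + j * (b - 1) \<le> (\<Sum>e\<in>#X. b ^ e)"
  shows "\<exists>Y. size Y = size X + j * (b - 1) \<and> (\<Sum>e\<in>#Y. b ^ e) = (\<Sum>e\<in>#X. b ^ e)
    \<and> \<not> set_mset Y \<subseteq> {1..<n}"
  using assms(2-4)
proof (induction j arbitrary: X)
  case 0
  then show ?case by auto
next
  case (Suc j)
  then have "size X < (\<Sum>e\<in>#X. b ^ e)" using assms(1) by simp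
  with borrow_keeping_exponent_outside[OF assms(1) Suc.prems(1,2)] obtain X1
    where X1: "size X1 = size X + (b - 1)" "(\<Sum>e\<in>#X1. b ^ e) = (\<Sum>e\<in>#X. b ^ e)"
      "\<not> set_mset X1 \<subseteq> {1..<n}"
    by blast
  have "size X1 + j * (b - 1) = size X + Suc j * (b - 1)" using X1(1) by simp
  with Suc.IH[of X1] X1 Suc.prems show ?case by (simp add: add.assoc)
qed

lemma ex_same_size_exponent_outside:
  assumes "1 < b" and "b ^ n < (\<Sum>e\<in>#X. b ^ e :: nat)"
  shows "\<exists>Y. size Y = size X \<and> (\<Sum>e\<in>#Y. b ^ e) = (\<Sum>e\<in>#X. b ^ e) \<and> \<not> set_mset Y \<subseteq> {1..<n}"
proof -
  obtain Y j where Y: "(\<Sum>e\<in>#Y. b ^ e) = (\<Sum>e\<in>#X. b ^ e)" "size X = size Y + j * (b - 1)"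
    "\<exists>e\<in>#Y. n \<le> e"
    using carry_until_exponent_ge[OF assms] by blast
  have "size Y + j * (b - 1) \<le> (\<Sum>e\<in>#Y. b ^ e)"
    using Y(1,2) size_le_sum_mset_power[of b X] assms(1) by linarith
  moreover have "\<not> set_mset Y \<subseteq> {1..<n}" using Y(3) by auto
  ultimately obtain Z where "size Z = size Y + j * (b - 1)" "(\<Sum>e\<in>#Z. b ^ e) = (\<Sum>e\<in>#Y. b ^ e)"
    "\<not> set_mset Z \<subseteq> {1..<n}"
    using borrow_iterated[OF assms(1), of Y n j] Y(1) assms(2) by auto
  with Y show ?thesis by metis
qed

locale repunit_semigroup =
  fixes a b n :: nat
  assumes a_pos: "0 < a" and b_gt_1: "1 < b" and n_gt_1: "1 < n"
    and coprime_repunit: "coprime (repunit b n) a"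
begin

abbreviation R :: nat where "R \<equiv> repunit b n"

abbreviation S :: "nat set" where "S \<equiv> S_abn a b n"

definition gen :: "nat \<Rightarrow> nat" where "gen e = R + a * repunit b e"

lemma R_pos: "0 < R"
  using strict_monoD[OF repunit_strict_mono, of b 0 n] b_gt_1 n_gt_1 by simp

lemma gen_0: "gen 0 = R"
  by (simp add: gen_def)

lemma R_le_gen: "R \<le> gen e"
  by (simp add: gen_def)

lemma gen_add_n: "gen (m + n) = gen m + a * b ^ m * R"
  by (simp add: gen_def repunit_add algebra_simps)

lemma strict_mono_gen: "strict_mono gen"
  using repunit_strict_mono[of b] b_gt_1 a_pos by (simp add: strict_mono_def gen_def)

lemma S_eq: "S = range (\<lambda>E. \<Sum>e\<in>#E. gen e)"
proof -
  have gens: "{gen_a a b n i | i. i \<ge> 1} = range gen"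
    by (force simp: gen_a_def gen_def image_def intro: exI[of _ "Suc _"])
  show ?thesis
    unfolding S_abn_def gens monoid_gen_eq_sum_mset
  proof (intro set_eqI iffI)
    fix x assume "x \<in> {\<Sum>\<^sub># X | X. set_mset X \<subseteq> range gen}"
    then obtain X where X: "set_mset X \<subseteq> range gen" "x = \<Sum>\<^sub># X" by blast
    then obtain E where "X = image_mset gen E" using ex_image_mset_eq[of X gen UNIV] by blast
    with X(2) show "x \<in> range (\<lambda>E. \<Sum>e\<in>#E. gen e)" by simp
  next
    fix x assume "x \<in> range (\<lambda>E. \<Sum>e\<in>#E. gen e)"
    then obtain E where "x = \<Sum>\<^sub># (image_mset gen E)" by blast
    moreover have "set_mset (image_mset gen E) \<subseteq> range gen" by auto
    ultimately show "x \<in> {\<Sum>\<^sub># X | X. set_mset X \<subseteq> range gen}" by blast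
  qed
qed

lemma sum_gen_in_S: "(\<Sum>e\<in>#E. gen e) \<in> S"
  by (simp add: S_eq)

lemma size_mult_R_le_sum_gen: "size E * R \<le> (\<Sum>e\<in>#E. gen e)"
  using sum_mset_mono[of E "\<lambda>_. R" gen] R_le_gen by simp

lemma sum_gen_eq: "(\<Sum>e\<in>#E. gen e) = size E * R + a * (\<Sum>e\<in>#E. repunit b e)"
  by (induction E) (simp_all add: gen_def algebra_simps)

lemma sum_gen_weight:
  "(b - 1) * (\<Sum>e\<in>#E. gen e) + a * size E = size E * ((b - 1) * R) + a * (\<Sum>e\<in>#E. b ^ e)"
proof -
  obtain c where c: "b - 1 = c" by simp
  have gen_weight: "c * gen e + a = c * R + a * b ^ e" for e
  proof -
    have "c * gen e + a = c * R + a * (c * repunit b e + 1)"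
      unfolding gen_def by (simp add: algebra_simps)
    also have "\<dots> = c * R + a * b ^ e"
      using pred_mult_repunit[of b e] b_gt_1 c by simp
    finally show ?thesis .
  qed
  show ?thesis
    unfolding c
  proof (induction E)
    case empty
    show ?case by simp
  next
    case (add e E)
    with gen_weight[of e] show ?case by (simp add: algebra_simps)
  qed
qed

lemma sum_gen_eq_if_size_weight_eq:
  assumes "size X = size Y" and "(\<Sum>e\<in>#X. b ^ e) = (\<Sum>e\<in>#Y. b ^ e)"
  shows "(\<Sum>e\<in>#X. gen e) = (\<Sum>e\<in>#Y. gen e)"
proof -
  have "(b - 1) * (\<Sum>e\<in>#X. gen e) = (b - 1) * (\<Sum>e\<in>#Y. gen e)"
    using sum_gen_weight[of X] sum_gen_weight[of Y] unfolding assms by linarith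
  then show ?thesis using b_gt_1 by simp
qed

lemma dvd_size_diff:
  assumes "(\<Sum>e\<in>#X. gen e) = (\<Sum>e\<in>#Y. gen e)" and "size Y \<le> size X"
  shows "a dvd size X - size Y"
proof -
  have "(size X - size Y) * R + a * (\<Sum>e\<in>#X. repunit b e) = a * (\<Sum>e\<in>#Y. repunit b e)"
    using assms sum_gen_eq[of X] sum_gen_eq[of Y] by (simp add: diff_mult_distrib)
  then have "a dvd (size X - size Y) * R"
    by (metis dvd_add_left_iff dvd_triv_left)
  then show ?thesis
    using coprime_repunit by (simp add: coprime_commute coprime_dvd_mult_left_iff)
qed

lemma gen_outside_eq_R_plus:
  assumes "c \<notin> {1..<n}"
  shows "\<exists>E. gen c = R + (\<Sum>e\<in>#E. gen e)"
proof (cases "c = 0")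
  case True
  then show ?thesis by (intro exI[of _ "{#}"]) (simp add: gen_0)
next
  case False
  with assms have "n \<le> c" by (simp add: not_less)
  then obtain m where c: "c = m + n" by (metis le_add_diff_inverse2)
  have "0 < a * b ^ m" using a_pos b_gt_1 by simp
  then obtain k where k: "a * b ^ m = Suc k" using gr0_conv_Suc by blast
  have "gen c = R + (\<Sum>e\<in>#add_mset m (replicate_mset k 0). gen e)"
    by (simp add: c gen_add_n k gen_0)
  then show ?thesis by blast
qed

lemma min_gens_eq: "min_gens S = gen ` {..<n}"
proof (intro set_eqI iffI)
  fix x assume x: "x \<in> min_gens S"
  then obtain E where E: "x = (\<Sum>e\<in>#E. gen e)" by (auto simp: min_gens_def S_eq)
  with x obtain c E' where E': "E = add_mset c E'" by (cases E) (auto simp: min_gens_def)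
  have gen_pos: "gen e \<noteq> 0" for e using R_le_gen[of e] R_pos by linarith
  have indec: "\<not> (\<exists>y\<in>S. \<exists>z\<in>S. y \<noteq> 0 \<and> z \<noteq> 0 \<and> x = y + z)"
    using x by (simp add: min_gens_def)
  have "E' = {#}"
  proof (rule ccontr)
    assume "E' \<noteq> {#}"
    then have "(\<Sum>e\<in>#E'. gen e) \<noteq> 0" using gen_pos by auto
    moreover have "gen c \<in> S" using sum_gen_in_S[of "{#c#}"] by simp
    moreover have "x = gen c + (\<Sum>e\<in>#E'. gen e)" using E E' by simp
    ultimately show False using indec gen_pos[of c] sum_gen_in_S[of E'] by blast
  qed
  moreover have "c < n"
  proof (rule ccontr)
    assume "\<not> c < n"
    then obtain F where F: "gen c = R + (\<Sum>e\<in>#F. gen e)" using gen_outside_eq_R_plus by auto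
    have "gen 0 < gen c" using strict_monoD[OF strict_mono_gen, of 0 c] \<open>\<not> c < n\<close> n_gt_1 by simp
    then have "(\<Sum>e\<in>#F. gen e) \<noteq> 0" using F gen_0 by linarith
    moreover have "R \<in> S" using sum_gen_in_S[of "{#0#}"] by (simp add: gen_0)
    moreover have "x = R + (\<Sum>e\<in>#F. gen e)" using F E E' \<open>E' = {#}\<close> by simp
    ultimately show False using indec R_pos sum_gen_in_S[of F] by blast
  qed
  ultimately show "x \<in> gen ` {..<n}" by (simp add: E E')
next
  fix x assume "x \<in> gen ` {..<n}"
  then obtain c where c: "c < n" "x = gen c" by blast
  have "\<not> (y \<in> S \<and> z \<in> S \<and> y \<noteq> 0 \<and> z \<noteq> 0 \<and> x = y + z)" for y z
  proof
    assume yz: "y \<in> S \<and> z \<in> S \<and> y \<noteq> 0 \<and> z \<noteq> 0 \<and> x = y + z"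
    then obtain Y Z where "y = (\<Sum>e\<in>#Y. gen e)" "z = (\<Sum>e\<in>#Z. gen e)" by (auto simp: S_eq)
    with yz c have sum: "(\<Sum>e\<in>#Y + Z. gen e) = (\<Sum>e\<in>#{#c#}. gen e)" and "Y \<noteq> {#}" "Z \<noteq> {#}"
      by auto
    then have two: "2 \<le> size (Y + Z)" by (simp add: Suc_le_eq nonempty_has_size)
    then have "a dvd size (Y + Z) - 1" using dvd_size_diff[OF sum] by simp
    then have "a \<le> size (Y + Z) - 1" using two by (intro dvd_imp_le) simp_all
    then have "Suc a \<le> size (Y + Z)" using two by linarith
    then have "Suc a * R \<le> size (Y + Z) * R" by (rule mult_le_mono1)
    also have "\<dots> \<le> gen c" using size_mult_R_le_sum_gen[of "Y + Z"] sum by simp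
    finally have "Suc a * R \<le> gen c" .
    moreover have "repunit b c < R" using strict_monoD[OF repunit_strict_mono c(1)] b_gt_1 by simp
    ultimately show False using a_pos by (simp add: gen_def)
  qed
  moreover have "x \<in> S" "x \<noteq> 0" using sum_gen_in_S[of "{#c#}"] c R_le_gen[of c] R_pos by auto
  ultimately show "x \<in> min_gens S" by (auto simp: min_gens_def)
qed

lemma multiplicity_eq: "multiplicity_ns S = R"
  unfolding multiplicity_ns_def
proof (rule Least_equality)
  show "R \<in> S \<and> R \<noteq> 0" using sum_gen_in_S[of "{#0#}"] R_pos by (simp add: gen_0)
next
  fix y assume "y \<in> S \<and> y \<noteq> 0"
  then obtain E where E: "y = (\<Sum>e\<in>#E. gen e)" by (auto simp: S_eq)
  with \<open>y \<in> S \<and> y \<noteq> 0\<close> have "1 \<le> size E" by (cases E) auto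
  then show "R \<le> y" using size_mult_R_le_sum_gen[of E] E by (metis mult_le_mono1 mult_1 order_trans)
qed

lemma apery_factorization_exponents:
  assumes "s \<in> apery S" and "(\<Sum>e\<in>#W. gen e) = s"
  shows "set_mset W \<subseteq> {1..<n}"
proof
  fix c assume "c \<in># W"
  then obtain W' where W: "W = add_mset c W'" by (metis multi_member_split)
  show "c \<in> {1..<n}"
  proof (rule ccontr)
    assume "c \<notin> {1..<n}"
    then obtain E where "gen c = R + (\<Sum>e\<in>#E. gen e)" using gen_outside_eq_R_plus by blast
    then have "s = R + (\<Sum>e\<in>#E + W'. gen e)" using assms(2) by (simp add: W)
    then show False using assms(1) sum_gen_in_S[of "E + W'"] by (simp add: apery_def multiplicity_eq)
  qed
qed

lemma weight_gt_power_if_shorter: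
  assumes sum: "(\<Sum>e\<in>#X. gen e) = (\<Sum>e\<in>#Y. gen e)" and shorter: "size Y < size X"
    and no_zero: "0 \<notin># X"
  shows "b ^ n < (\<Sum>e\<in>#Y. b ^ e)"
proof -
  define Q where "Q = (b - 1) * R"
  obtain t where t: "size X = size Y + a * t"
    using dvd_size_diff[OF sum] shorter by (metis dvdE less_imp_le le_add_diff_inverse)
  with shorter have "1 \<le> t" by (cases t) auto
  have "1 \<le> size Y"
  proof (rule ccontr)
    assume "\<not> 1 \<le> size Y"
    then have "Y = {#}" by (simp add: not_less_eq_eq)
    then have "(\<Sum>e\<in>#X. gen e) = 0" using sum by simp
    moreover have "size X * R \<le> (\<Sum>e\<in>#X. gen e)" by (rule size_mult_R_le_sum_gen)
    ultimately show False using shorter R_pos by (simp del: sum_mset_0_iff)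
  qed
  have "(\<Sum>e\<in>#X. b) \<le> (\<Sum>e\<in>#X. b ^ e)"
    using no_zero b_gt_1 by (intro sum_mset_mono self_le_power) (auto intro: gr0I)
  then have weight_X: "b * size Y + b * (a * t) \<le> (\<Sum>e\<in>#X. b ^ e)"
    by (simp add: t algebra_simps)
  have "a * ((\<Sum>e\<in>#Y. b ^ e) + a * t) = a * ((\<Sum>e\<in>#X. b ^ e) + t * Q)"
    using sum_gen_weight[of X] sum_gen_weight[of Y] sum
    unfolding Q_def[symmetric] t by (simp add: algebra_simps)
  then have weights: "(\<Sum>e\<in>#Y. b ^ e) + a * t = (\<Sum>e\<in>#X. b ^ e) + t * Q"
    using a_pos by simp
  have "Q + 1 = b ^ n" unfolding Q_def using pred_mult_repunit[of b n] b_gt_1 by simp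
  then have "t * Q + t = t * b ^ n" by (metis distrib_left mult.right_neutral)
  moreover have "a * t + t \<le> b * (a * t)"
  proof -
    have "2 * a * t \<le> b * (a * t)" using b_gt_1 by simp
    moreover have "t \<le> a * t" using a_pos by simp
    ultimately show ?thesis by linarith
  qed
  moreover have "b ^ n \<le> t * b ^ n" using \<open>1 \<le> t\<close> by simp
  moreover have "0 < b * size Y" using \<open>1 \<le> size Y\<close> b_gt_1 by simp
  ultimately show ?thesis using weights weight_X by linarith
qed

lemma apery_factorization_sizes_eq:
  assumes s: "s \<in> apery S" and "(\<Sum>e\<in>#X. gen e) = s" and "(\<Sum>e\<in>#Y. gen e) = s"
  shows "size X = size Y"
proof -
  have shorter_impossible: False if X: "(\<Sum>e\<in>#X. gen e) = s" and Y: "(\<Sum>e\<in>#Y. gen e) = s" and "size Y < size X"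
    for X Y
  proof -
    have "0 \<notin># X" using apery_factorization_exponents[OF s X] by auto
    with X Y \<open>size Y < size X\<close> have "b ^ n < (\<Sum>e\<in>#Y. b ^ e)"
      by (intro weight_gt_power_if_shorter) simp_all
    then obtain W where W: "size W = size Y" "(\<Sum>e\<in>#W. b ^ e) = (\<Sum>e\<in>#Y. b ^ e)"
      and outside: "\<not> set_mset W \<subseteq> {1..<n}"
      using ex_same_size_exponent_outside b_gt_1 by blast
    have "(\<Sum>e\<in>#W. gen e) = s" using sum_gen_eq_if_size_weight_eq[OF W] Y by simp
    with outside show False using apery_factorization_exponents[OF s] by blast
  qed
  show ?thesis
    using shorter_impossible[OF assms(2,3)] shorter_impossible[OF assms(3,2)]
    by (meson linorder_neqE_nat)
qed

lemma homogeneous_S_abn: "homogeneous S"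
  unfolding homogeneous_def
proof
  fix s assume s: "s \<in> apery S"
  obtain X0 where X0: "set_mset X0 \<subseteq> min_gens S" "\<Sum>\<^sub># X0 = s"
    using sum_mset_min_gens[of s S] s by (auto simp: apery_def)
  have sizes: "size X = size X0" if X: "set_mset X \<subseteq> min_gens S" "\<Sum>\<^sub># X = s" for X
  proof -
    obtain E where E: "X = image_mset gen E"
      using ex_image_mset_eq[of X gen "{..<n}"] X(1) unfolding min_gens_eq by blast
    obtain E0 where E0: "X0 = image_mset gen E0"
      using ex_image_mset_eq[of X0 gen "{..<n}"] X0(1) unfolding min_gens_eq by blast
    have "size E = size E0"
      using X(2) X0(2) by (intro apery_factorization_sizes_eq[OF s]) (simp_all add: E E0)
    then show ?thesis by (simp add: E E0)
  qed
  have "lengths S s = {size X | X. set_mset X \<subseteq> min_gens S \<and> \<Sum>\<^sub># X = s}"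
    by (rule lengths_eq_sizes) (simp add: min_gens_eq)
  also have "\<dots> = {size X0}" using X0 sizes by blast
  finally show "\<exists>l. lengths S s = {l}" by blast
qed

end

theorem proposition17:
  fixes a b n :: nat
  assumes "a > 0" and "b > 1" and "n > 1" and "coprime (repunit b n) a"
  shows "homogeneous (S_abn a b n)"
proof -
  interpret repunit_semigroup a b n
    using assms by unfold_locales
  show ?thesis by (rule homogeneous_S_abn)
qed

end
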